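(* Let $\lambda:V^X\to\mathbb{N}\cup\{+\infty\}$ be a labeling function, $v\in V^X$, and let $\rho=\rho_0\rho_1\dots$ be a $\lambda$-consistent play in $\mathrm{Plays}_X(v)$. Then there exists an infinite path $\pi=\pi_0\pi_1\dots$ in $\mathbb{C}(\lambda)$ such that $\pi_0=v^C$ and, for every $n\in\mathbb{N}$, $\pi_n$ is of the form $(\rho_n,(c'_i)_{i\in\Pi})$ (i.e., $\rho$ is the projection of $\pi$ on $V^X$).
   Context: Let $\mathcal{G}$ be a quantitative reachability game on an arena $G=(\Pi,V,(V_i)_{i\in\Pi},E)$ (finite player set $\Pi$, finite vertex set $V$, partition $(V_i)$, every vertex has a successor) with targets $F_i\subseteq V$. Its extended arena $X$ has vertices $V^X=V\times2^\Pi$, edges $((v,I),(v',I'))\in E^X$ iff $(v,v')\in E$ and $I'=I\cup\{i:v'\in F_i\}$, $(v,I)\in V^X_i$ iff $v\in V_i$; for $u\in V^X$, $I(u)$ is its second component. For a play $\rho$ of $X$, $\mathrm{Cost}_i(\rho)$ is the least $k$ with $i\in I(\rho_k)$, or $+\infty$; $\mathrm{Plays}_X(v)$ is the set of plays of $X$ starting at $v$. A play $\rho$ of $X$ is $\lambda$-consistent if $\mathrm{Cost}_i(\rho_{\ge n})\le\lambda(\rho_n)$ for all $n$ and all $i$ with $\rho_n\in V^X_i$, where $\rho_{\ge n}=\rho_n\rho_{n+1}\dots$. Counter graph $\mathbb{C}(\lambda)$: let $K$ be the maximum of the finite values of $\lambda$ ($0$ if none) and $\mathcal{K}=\{0,\dots,K\}\cup\{+\infty\}$;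 vertices are $V^X\times\mathcal{K}^\Pi$, and there is an edge from $(u,(c_i)_i)$ to $(u',(c'_i)_i)$ iff $(u,u')\in E^X$ and for every $i\in\Pi$: either $i\in I(u')$ and $c'_i=0$; or $i\notin I(u')$, $u'\notin V^X_i$, $c_i>1$ and $c'_i=c_i-1$; or $i\notin I(u')$, $u'\in V^X_i$, $c_i>1$ and $c'_i=\min(c_i-1,\lambda(u'))$ (with $+\infty-1=+\infty$). The starting vertex of $u\in V^X$ is $u^C=(u,(c_i)_i)$ with $c_i=0$ if $i\in I(u)$, $c_i=\lambda(u)$ if $i\notin I(u)$ and $u\in V^X_i$, and $c_i=+\infty$ otherwise. *)

theory Defs
  imports Main "HOL-Library.Extended_Nat"
begin

text \<open>Arena: players are the elements of a finite type 'p (so \<Pi> = UNIV),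
 vertices V :: 'v set, edges E, the partition (V_i) is given by an owner
 function (v \<in> V_i iff owner v = i), targets F i.\<close>

definition arena :: "'v set \<Rightarrow> ('v \<times> 'v) set \<Rightarrow> ('p \<Rightarrow> 'v set) \<Rightarrow> bool" where
  "arena V E F \<longleftrightarrow> finite V \<and> E \<subseteq> V \<times> V \<and> (\<forall>v\<in>V. \<exists>v'. (v, v') \<in> E)
     \<and> (\<forall>i. F i \<subseteq> V)"

definition ext_vertices :: "'v set \<Rightarrow> ('v \<times> 'p set) set" where
  "ext_vertices V = V \<times> UNIV"

definition ext_edges :: "('v \<times> 'v) set \<Rightarrow> ('p \<Rightarrow> 'v set)
    \<Rightarrow> (('v \<times> 'p set) \<times> ('v \<times> 'p set)) set" where
  "ext_edges E F = {((v, I), (v', I')). (v, v') \<in> E \<and> I' = I \<union> {i. v' \<in> F i}}"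

definition ext_owner :: "('v \<Rightarrow> 'p) \<Rightarrow> 'v \<times> 'p set \<Rightarrow> 'p" where
  "ext_owner owner u = owner (fst u)"

definition Iof :: "'v \<times> 'p set \<Rightarrow> 'p set" where
  "Iof u = snd u"

definition plays_from :: "'v set \<Rightarrow> ('v \<times> 'v) set \<Rightarrow> ('p \<Rightarrow> 'v set) \<Rightarrow> 'v \<times> 'p set
    \<Rightarrow> (nat \<Rightarrow> 'v \<times> 'p set) set" where
  "plays_from V E F u = {\<rho>. \<rho> 0 = u \<and> (\<forall>n. \<rho> n \<in> ext_vertices V)
      \<and> (\<forall>n. (\<rho> n, \<rho> (Suc n)) \<in> ext_edges E F)}"

definition cost :: "'p \<Rightarrow> (nat \<Rightarrow> 'v \<times> 'p set) \<Rightarrow> enat" where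
  "cost i \<rho> = (if \<exists>k. i \<in> Iof (\<rho> k) then enat (LEAST k. i \<in> Iof (\<rho> k)) else \<infinity>)"

definition suffix :: "(nat \<Rightarrow> 'a) \<Rightarrow> nat \<Rightarrow> nat \<Rightarrow> 'a" where
  "suffix \<rho> n = (\<lambda>k. \<rho> (n + k))"

definition lam_consistent :: "('v \<Rightarrow> 'p) \<Rightarrow> ('v \<times> 'p set \<Rightarrow> enat) \<Rightarrow> (nat \<Rightarrow> 'v \<times> 'p set) \<Rightarrow> bool" where
  "lam_consistent owner lam \<rho> \<longleftrightarrow>
     (\<forall>n i. ext_owner owner (\<rho> n) = i \<longrightarrow> cost i (suffix \<rho> n) \<le> lam (\<rho> n))"

definition Kmax :: "'v set \<Rightarrow> ('v \<times> 'p set \<Rightarrow> enat) \<Rightarrow> nat" where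
  "Kmax V lam = (let S = {k. \<exists>u \<in> ext_vertices V. lam u = enat k} in
                  if S = {} then 0 else Max S)"

definition Kset :: "'v set \<Rightarrow> ('v \<times> 'p set \<Rightarrow> enat) \<Rightarrow> enat set" where
  "Kset V lam = {enat k | k. k \<le> Kmax V lam} \<union> {\<infinity>}"

definition counter_vertices :: "'v set \<Rightarrow> ('v \<times> 'p set \<Rightarrow> enat)
    \<Rightarrow> (('v \<times> 'p set) \<times> ('p \<Rightarrow> enat)) set" where
  "counter_vertices V lam = ext_vertices V \<times> {c. \<forall>i. c i \<in> Kset V lam}"

definition counter_edge :: "'v set \<Rightarrow> ('v \<times> 'v) set \<Rightarrow> ('v \<Rightarrow> 'p) \<Rightarrow> ('p \<Rightarrow> 'v set)
    \<Rightarrow> ('v \<times> 'p set \<Rightarrow> enat)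
    \<Rightarrow> ('v \<times> 'p set) \<times> ('p \<Rightarrow> enat) \<Rightarrow> ('v \<times> 'p set) \<times> ('p \<Rightarrow> enat) \<Rightarrow> bool" where
  "counter_edge V E owner F lam x y \<longleftrightarrow>
     x \<in> counter_vertices V lam \<and> y \<in> counter_vertices V lam \<and>
     (let (u, c) = x; (u', c') = y in
       (u, u') \<in> ext_edges E F \<and>
       (\<forall>i. (i \<in> Iof u' \<and> c' i = 0)
          \<or> (i \<notin> Iof u' \<and> ext_owner owner u' \<noteq> i \<and> c i > 1 \<and> c' i = c i - 1)
          \<or> (i \<notin> Iof u' \<and> ext_owner owner u' = i \<and> c i > 1 \<and> c' i = min (c i - 1) (lam u'))))"

definition start_vertex :: "('v \<Rightarrow> 'p) \<Rightarrow> ('v \<times> 'p set \<Rightarrow> enat) \<Rightarrow> 'v \<times> 'p set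
    \<Rightarrow> ('v \<times> 'p set) \<times> ('p \<Rightarrow> enat)" where
  "start_vertex owner lam u =
     (u, (\<lambda>i. if i \<in> Iof u then 0
              else if ext_owner owner u = i then lam u else \<infinity>))"

end

theory Submission
  imports Defs
begin

text \<open>Run through the play \<rho> and update the counters deterministically as the edge
  relation of the counter graph prescribes. By induction along \<rho>, the counter of
  every player i that has not yet reached its target bounds the cost of i on the
  remaining suffix: the counter and the cost both drop by one at each step, and
  when i owns the current vertex the counter is capped at \<lambda>, which is still a
  bound by \<lambda>-consistency. Since that cost is at least 2 one step before the
  target is reached, every counter is greater than 1 whenever the edge relation
  requires it, so the counter run is a path of the counter graph.\<close>

lemma cost_eq_0_iff: "cost i r = 0 \<longleftrightarrow> i \<in> Iof (r 0)"
  unfolding cost_def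
  by (auto simp: zero_enat_def intro: Least_eq_0) (metis (mono_tags) LeastI)

lemma cost_suffix_Suc:
  assumes "i \<notin> Iof (r n)"
  shows "cost i (suffix r n) = eSuc (cost i (suffix r (Suc n)))"
proof (cases "\<exists>k. i \<in> Iof (r (n + k))")
  case True
  then obtain k where k: "i \<in> Iof (r (n + k))" by blast
  have reached: "\<exists>k. i \<in> Iof (r (Suc n + k))"
    using True assms by (metis add.right_neutral add_Suc_shift not0_implies_Suc)
  have "(LEAST k. i \<in> Iof (r (n + k))) = Suc (LEAST k. i \<in> Iof (r (Suc n + k)))"
    using Least_Suc[of "\<lambda>k. i \<in> Iof (r (n + k))", OF k] assms by simp
  then show ?thesis
    using True reached unfolding cost_def suffix_def by (simp add: eSuc_enat)
next
  case False
  then have "\<not> (\<exists>k. i \<in> Iof (r (Suc n + k)))"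
    by (metis add_Suc_shift add_Suc)
  then show ?thesis
    using False unfolding cost_def suffix_def by simp
qed

lemma eSuc_le_imp_le_minus_1: "eSuc x \<le> c \<Longrightarrow> x \<le> c - (1::enat)"
  by (cases c; cases x) (auto simp: eSuc_enat one_enat_def)

lemma one_less_eSuc: "x \<noteq> 0 \<Longrightarrow> 1 < eSuc (x::enat)"
  by (cases x) (auto simp: eSuc_enat one_enat_def zero_enat_def)

lemma ext_edge_Iof_mono: "(u, u') \<in> ext_edges E F \<Longrightarrow> Iof u \<subseteq> Iof u'"
  by (cases u; cases u') (auto simp: ext_edges_def Iof_def)

lemma Kset_zero: "0 \<in> Kset V lam"
  unfolding Kset_def by (auto simp: zero_enat_def)

lemma Kset_infinity: "\<infinity> \<in> Kset V lam"
  unfolding Kset_def by auto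

lemma Kset_minus_1: "x \<in> Kset V lam \<Longrightarrow> x - 1 \<in> Kset V lam"
  unfolding Kset_def by (auto simp: one_enat_def)

lemma Kset_lam:
  fixes u :: "'v \<times> 'p::finite set"
  assumes "finite V" and "u \<in> ext_vertices V"
  shows "lam u \<in> Kset V lam"
proof (cases "lam u")
  case (enat k)
  define S where "S = {k. \<exists>u \<in> ext_vertices V. lam u = enat k}"
  have "S \<subseteq> (\<lambda>u. case lam u of enat k \<Rightarrow> k | \<infinity> \<Rightarrow> 0) ` ext_vertices V"
    unfolding S_def by (force split: enat.splits)
  moreover have "finite (ext_vertices V :: ('v \<times> 'p set) set)"
    using assms(1) unfolding ext_vertices_def by simp
  ultimately have "finite S" by (meson finite_surj)
  moreover have "k \<in> S" using enat assms(2) unfolding S_def by blast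
  ultimately have "k \<le> Kmax V lam" unfolding Kmax_def S_def[symmetric] Let_def by auto
  then show ?thesis using enat unfolding Kset_def by auto
qed (simp add: Kset_infinity)

definition counter_update :: "('v \<Rightarrow> 'p) \<Rightarrow> ('v \<times> 'p set \<Rightarrow> enat) \<Rightarrow> 'v \<times> 'p set
    \<Rightarrow> ('p \<Rightarrow> enat) \<Rightarrow> 'p \<Rightarrow> enat" where
  "counter_update owner lam u' c i =
     (if i \<in> Iof u' then 0
      else if ext_owner owner u' = i then min (c i - 1) (lam u')
      else c i - 1)"

primrec counter_run :: "('v \<Rightarrow> 'p) \<Rightarrow> ('v \<times> 'p set \<Rightarrow> enat) \<Rightarrow> (nat \<Rightarrow> 'v \<times> 'p set)
    \<Rightarrow> nat \<Rightarrow> 'p \<Rightarrow> enat" where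
  "counter_run owner lam \<rho> 0 = snd (start_vertex owner lam (\<rho> 0))"
| "counter_run owner lam \<rho> (Suc n) =
     counter_update owner lam (\<rho> (Suc n)) (counter_run owner lam \<rho> n)"

lemma counter_update_Kset:
  fixes u' :: "'v \<times> 'p::finite set"
  assumes "finite V" and "u' \<in> ext_vertices V" and "c i \<in> Kset V lam"
  shows "counter_update owner lam u' c i \<in> Kset V lam"
  using Kset_minus_1[OF assms(3)] Kset_lam[OF assms(1,2)]
  unfolding counter_update_def by (simp add: min_def Kset_zero)

lemma counter_run_Kset:
  fixes \<rho> :: "nat \<Rightarrow> 'v \<times> 'p::finite set"
  assumes "finite V" and "\<And>n. \<rho> n \<in> ext_vertices V"
  shows "counter_run owner lam \<rho> n i \<in> Kset V lam"
proof (induction n)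
  case 0
  show ?case
    using Kset_lam[OF assms(1,2)]
    by (simp add: start_vertex_def Kset_zero Kset_infinity)
next
  case (Suc n)
  then show ?case by (simp add: counter_update_Kset assms)
qed

lemma counter_run_ge_cost:
  assumes mono: "\<And>n. Iof (\<rho> n) \<subseteq> Iof (\<rho> (Suc n))"
    and consistent: "lam_consistent owner lam \<rho>"
    and "i \<notin> Iof (\<rho> n)"
  shows "cost i (suffix \<rho> n) \<le> counter_run owner lam \<rho> n i"
  using assms(3)
proof (induction n)
  case 0
  have "cost (ext_owner owner (\<rho> 0)) (suffix \<rho> 0) \<le> lam (\<rho> 0)"
    using consistent unfolding lam_consistent_def by blast
  then show ?case
    using 0 by (auto simp: start_vertex_def)
next
  case (Suc n)
  then have "i \<notin> Iof (\<rho> n)" using mono by blast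
  then have "eSuc (cost i (suffix \<rho> (Suc n))) \<le> counter_run owner lam \<rho> n i"
    using Suc.IH cost_suffix_Suc by metis
  then have "cost i (suffix \<rho> (Suc n)) \<le> counter_run owner lam \<rho> n i - 1"
    by (rule eSuc_le_imp_le_minus_1)
  moreover have "cost i (suffix \<rho> (Suc n)) \<le> lam (\<rho> (Suc n))"
    if "ext_owner owner (\<rho> (Suc n)) = i"
    using consistent that unfolding lam_consistent_def by blast
  ultimately show ?case
    using Suc.prems by (simp add: counter_update_def)
qed

lemma counter_run_gt_1:
  assumes "\<And>n. Iof (\<rho> n) \<subseteq> Iof (\<rho> (Suc n))"
    and "lam_consistent owner lam \<rho>"
    and "i \<notin> Iof (\<rho> (Suc n))"
  shows "1 < counter_run owner lam \<rho> n i"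
proof -
  have unreached: "i \<notin> Iof (\<rho> n)" using assms(1,3) by blast
  have "cost i (suffix \<rho> (Suc n)) \<noteq> 0"
    using assms(3) by (simp add: cost_eq_0_iff suffix_def)
  then have "1 < cost i (suffix \<rho> n)"
    using cost_suffix_Suc[of i \<rho> n, OF unreached] one_less_eSuc by metis
  also have "\<dots> \<le> counter_run owner lam \<rho> n i"
    using counter_run_ge_cost[OF assms(1,2) unreached] .
  finally show ?thesis .
qed

lemma counter_edge_counter_update:
  assumes "(u, c) \<in> counter_vertices V lam"
    and "(u', counter_update owner lam u' c) \<in> counter_vertices V lam"
    and "(u, u') \<in> ext_edges E F"
    and "\<And>i. i \<notin> Iof u' \<Longrightarrow> 1 < c i"
  shows "counter_edge V E owner F lam (u, c) (u', counter_update owner lam u' c)"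
  using assms unfolding counter_edge_def by (auto simp: counter_update_def)

theorem lemma3p5:
  fixes V :: "'v set" and E :: "('v \<times> 'v) set" and owner :: "'v \<Rightarrow> 'p::finite"
    and F :: "'p \<Rightarrow> 'v set" and lam :: "'v \<times> 'p set \<Rightarrow> enat"
    and v :: "'v \<times> 'p set" and \<rho> :: "nat \<Rightarrow> 'v \<times> 'p set"
  assumes "arena V E F"
    and "v \<in> ext_vertices V"
    and "\<rho> \<in> plays_from V E F v"
    and "lam_consistent owner lam \<rho>"
  shows "\<exists>\<pi> :: nat \<Rightarrow> ('v \<times> 'p set) \<times> ('p \<Rightarrow> enat).
           \<pi> 0 = start_vertex owner lam v
         \<and> (\<forall>n. \<pi> n \<in> counter_vertices V lam)
         \<and> (\<forall>n. counter_edge V E owner F lam (\<pi> n) (\<pi> (Suc n)))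
         \<and> (\<forall>n. fst (\<pi> n) = \<rho> n)"
proof -
  have "finite V" using assms(1) unfolding arena_def by simp
  have start: "\<rho> 0 = v" and in_X: "\<And>n. \<rho> n \<in> ext_vertices V"
    and edges: "\<And>n. (\<rho> n, \<rho> (Suc n)) \<in> ext_edges E F"
    using assms(3) unfolding plays_from_def by auto
  have mono: "\<And>n. Iof (\<rho> n) \<subseteq> Iof (\<rho> (Suc n))"
    using edges ext_edge_Iof_mono by blast
  define \<pi> where "\<pi> n = (\<rho> n, counter_run owner lam \<rho> n)" for n
  have vertices: "\<pi> n \<in> counter_vertices V lam" for n
    using in_X counter_run_Kset[OF \<open>finite V\<close> in_X]
    unfolding \<pi>_def counter_vertices_def by auto
  have "counter_edge V E owner F lam (\<pi> n) (\<pi> (Suc n))" for n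
    using counter_edge_counter_update[OF _ _ edges counter_run_gt_1[OF mono assms(4)]]
      vertices[of n] vertices[of "Suc n"]
    unfolding \<pi>_def by simp
  moreover have "\<pi> 0 = start_vertex owner lam v"
    using start unfolding \<pi>_def by (simp add: start_vertex_def)
  ultimately show ?thesis
    using vertices by (intro exI[of _ \<pi>]) (simp add: \<pi>_def)
qed

end
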